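(* For all integers $\alpha\ge 1$ and $n\ge 0$, \[\overline{p}\big(5^{2\alpha+1}(5n+1)\big)\equiv \overline{p}\big(5^{2\alpha+1}(5n+4)\big)\equiv 0 \pmod 5.\]
   Context: An overpartition of a nonnegative integer $n$ is a partition of $n$ in which the first occurrence of each distinct part may (or may not) be overlined; $\overline{p}(n)$ denotes the number of overpartitions of $n$ (with $\overline{p}(0)=1$). Equivalently, $\sum_{n\ge0}\overline{p}(n)q^n=\prod_{k\ge1}\frac{1+q^k}{1-q^k}$. *)

theory Defs
  imports Main "HOL-Library.Multiset"
begin

text \<open>An overpartition of n is a pair (M, S) where M is a partition of n and
S is the set of distinct parts of M whose first occurrence is overlined.\<close>

definition overpartitions :: "nat \<Rightarrow> (nat multiset \<times> nat set) set" where
  "overpartitions n = {(M, S). (\<forall>x\<in>#M. 0 < x) \<and> sum_mset M = n \<and> S \<subseteq> set_mset M}"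

definition pbar :: "nat \<Rightarrow> nat" where
  "pbar n = card (overpartitions n)"

end

theory Submission
  imports Defs "HOL-Computational_Algebra.Computational_Algebra" "HOL-Library.Numeral_Type"
begin

(*
  Write theta(q) = sum_{k in Z} q^(k^2).  Gauss's identity sum_n pbar(n) (-q)^n = 1/theta(q),
  proved below from a finite form of the Jacobi triple product, reduces the theorem to facts
  about theta over the field with 5 elements.  There theta^5 = theta(q^5), the 5-dissection of
  theta only has components of residues 0, 1 and 4, the first one being theta(q^5), and
  theta^2 = theta(q^5)^2 + q theta_1 theta_4; the last identity comes from the bijection
  u + vi |-> (u + vi)(2 + i) on sums of two squares.  From these facts alone one computes that
  the residue-0 section of 1/theta is theta^3, and that passing to the coefficients of index 25n
  of theta^3 kills the residues 1 and 4 modulo 5 and fixes the multiples of 5.  Hence the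
  coefficient of q^(25^a (5n + r)) in theta^3, which is +-pbar(5^(2a+1) (5n + r)) modulo 5,
  vanishes for r = 1, 4.
*)

section \<open>Dilations and sections of formal power series\<close>

definition fps_dilate :: "nat \<Rightarrow> 'a::zero fps \<Rightarrow> 'a fps" where
  "fps_dilate m A = Abs_fps (\<lambda>n. if m dvd n then A $ (n div m) else 0)"

definition fps_section :: "nat \<Rightarrow> nat \<Rightarrow> 'a::zero fps \<Rightarrow> 'a fps" where
  "fps_section m r A = Abs_fps (\<lambda>n. A $ (m * n + r))"

lemma fps_dilate_nth [simp]: "fps_dilate m A $ n = (if m dvd n then A $ (n div m) else 0)"
  by (simp add: fps_dilate_def)

lemma fps_section_nth [simp]: "fps_section m r A $ n = A $ (m * n + r)"
  by (simp add: fps_section_def)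

lemma fps_section_diff:
  "fps_section m r (A - B :: 'a::group_add fps) = fps_section m r A - fps_section m r B"
  by (rule fps_ext) simp

lemma fps_section_sum:
  "fps_section m r (\<Sum>i\<in>I. F i :: 'a::comm_monoid_add fps) = (\<Sum>i\<in>I. fps_section m r (F i))"
  by (rule fps_ext) (simp add: fps_sum_nth)

lemma fps_section_numeral_mult:
  "fps_section m r (numeral k * A) = numeral k * fps_section m r (A :: 'a::comm_semiring_1 fps)"
  by (rule fps_ext) (simp add: numeral_fps_const)

lemma fps_dilate_one: "m > 0 \<Longrightarrow> fps_dilate m (1 :: 'a::{zero,one} fps) = 1"
  by (rule fps_ext) (auto elim: dvdE)

lemma sum_multiples_of:
  fixes f :: "nat \<Rightarrow> 'a::comm_monoid_add"
  assumes "m > 0" and "\<And>i. \<not> m dvd i \<Longrightarrow> f i = 0"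
  shows "(\<Sum>i=0..m * k. f i) = (\<Sum>j=0..k. f (m * j))"
proof -
  have "f i = 0" if "i \<le> m * k" "i \<notin> (\<lambda>j. m * j) ` {0..k}" for i
    using that assms by (metis atLeastAtMost_iff dvdE image_eqI le_0_eq mult_le_cancel1 zero_le)
  then have "(\<Sum>i=0..m * k. f i) = (\<Sum>i\<in>(\<lambda>j. m * j) ` {0..k}. f i)"
    by (intro sum.mono_neutral_right) auto
  also have "\<dots> = (\<Sum>j=0..k. f (m * j))"
    using assms(1) by (subst sum.reindex) (auto simp: inj_on_def)
  finally show ?thesis .
qed

lemma fps_dilate_mult:
  fixes A B :: "'a::comm_semiring_1 fps"
  assumes "m > 0"
  shows "fps_dilate m (A * B) = fps_dilate m A * fps_dilate m B"
proof (rule fps_ext)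
  fix n
  show "fps_dilate m (A * B) $ n = (fps_dilate m A * fps_dilate m B) $ n"
  proof (cases "m dvd n")
    case True
    then obtain k where n: "n = m * k" by (auto elim: dvdE)
    have "(fps_dilate m A * fps_dilate m B) $ n
        = (\<Sum>i=0..m * k. fps_dilate m A $ i * fps_dilate m B $ (m * k - i))"
      by (simp add: fps_mult_nth n)
    also have "\<dots> = (\<Sum>j=0..k. fps_dilate m A $ (m * j) * fps_dilate m B $ (m * k - m * j))"
      using assms by (intro sum_multiples_of) auto
    also have "\<dots> = (\<Sum>j=0..k. A $ j * B $ (k - j))"
      using assms by (intro sum.cong) (auto simp flip: diff_mult_distrib2)
    finally show ?thesis
      using assms by (simp add: n fps_mult_nth)
  next
    case False
    have "\<not> (m dvd i \<and> m dvd (n - i))" if "i \<le> n" for i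
      using False that by (metis dvd_add le_add_diff_inverse)
    then show ?thesis
      using False by (auto simp: fps_mult_nth intro!: sum.neutral)
  qed
qed

lemma fps_dilate_power:
  "m > 0 \<Longrightarrow> fps_dilate m (A ^ k :: 'a::comm_semiring_1 fps) = fps_dilate m A ^ k"
  by (induction k) (simp_all add: fps_dilate_one fps_dilate_mult)

lemma le_and_dvd_diff_iff:
  fixes m n r s :: nat
  assumes "r < m"
  shows "s \<le> m * n + r \<and> m dvd (m * n + r - s) \<longleftrightarrow> s mod m = r \<and> s div m \<le> n"
proof
  assume "s \<le> m * n + r \<and> m dvd (m * n + r - s)"
  then obtain k where "m * n + r - s = m * k" and "s \<le> m * n + r"
    by (auto elim: dvdE)
  then have k: "m * n + r = s + m * k"
    by linarith
  then have "(s + m * k) mod m = r"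
    using assms by (metis mod_mult_self3 mod_less mult.commute)
  then have "s mod m = r"
    by simp
  moreover have "m * n = m * (s div m + k)"
    using k calculation div_mult_mod_eq[of s m] by (simp add: algebra_simps)
  then have "s div m \<le> n"
    using assms by simp
  ultimately show "s mod m = r \<and> s div m \<le> n" ..
next
  assume h: "s mod m = r \<and> s div m \<le> n"
  define q where "q = s div m"
  have s: "s = m * q + r" and "q \<le> n"
    using h div_mult_mod_eq[of s m] by (simp_all add: q_def mult.commute)
  then have "m * n + r - s = m * (n - q)"
    by (simp add: diff_mult_distrib2)
  moreover have "m * q \<le> m * n"
    using \<open>q \<le> n\<close> by simp
  ultimately show "s \<le> m * n + r \<and> m dvd (m * n + r - s)"
    using s by simp
qed

lemma fps_section_X_power_mult_dilate:
  fixes C :: "'a::comm_semiring_1 fps"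
  assumes "r < m"
  shows "fps_section m r (fps_X ^ s * fps_dilate m C)
           = (if s mod m = r then fps_X ^ (s div m) * C else 0)"
proof (rule fps_ext)
  fix n
  have "(m * n + r - s) div m = n - s div m" if "s mod m = r"
  proof -
    have s: "s = m * (s div m) + r"
      using that div_mult_mod_eq[of s m] by (simp add: mult.commute)
    have "m * n + r - (m * (s div m) + r) = m * (n - s div m)"
      by (simp add: diff_mult_distrib2)
    then show ?thesis
      using assms by (subst s) simp
  qed
  then show "fps_section m r (fps_X ^ s * fps_dilate m C) $ n
      = (if s mod m = r then fps_X ^ (s div m) * C else 0) $ n"
    using le_and_dvd_diff_iff[OF assms, of s n] by (auto simp: fps_X_power_mult_nth)
qed

lemma fps_section_decomposition:
  fixes A :: "'a::comm_semiring_1 fps"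
  assumes "m > 0"
  shows "A = (\<Sum>i<m. fps_X ^ i * fps_dilate m (fps_section m i A))"
proof (rule fps_ext)
  fix n
  have "(fps_X ^ i * fps_dilate m (fps_section m i A)) $ n = (if i = n mod m then A $ n else 0)"
    if "i < m" for i
  proof -
    have "i \<le> n \<and> m dvd (n - i) \<longleftrightarrow> i = n mod m"
    proof
      assume "i \<le> n \<and> m dvd (n - i)"
      then obtain k where "n = m * k + i"
        by (metis dvdE le_add_diff_inverse2)
      then show "i = n mod m"
        using that by simp
    next
      assume "i = n mod m"
      then show "i \<le> n \<and> m dvd (n - i)"
        by (simp add: minus_mod_eq_mult_div)
    qed
    moreover have "m * ((n - i) div m) + i = n" if "i = n mod m"
      using that by (simp add: minus_mod_eq_mult_div)
    ultimately show ?thesis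
      by (auto simp: fps_X_power_mult_nth)
  qed
  then show "A $ n = (\<Sum>i<m. fps_X ^ i * fps_dilate m (fps_section m i A)) $ n"
    using assms by (simp add: fps_sum_nth)
qed

lemma fps_section_mult:
  fixes A B :: "'a::comm_semiring_1 fps"
  assumes "r < m"
  shows "fps_section m r (A * B) = (\<Sum>i<m. \<Sum>j<m. if (i + j) mod m = r
           then fps_X ^ ((i + j) div m) * (fps_section m i A * fps_section m j B) else 0)"
proof -
  have "A * B = (\<Sum>i<m. fps_X ^ i * fps_dilate m (fps_section m i A))
              * (\<Sum>j<m. fps_X ^ j * fps_dilate m (fps_section m j B))"
    using assms by (subst (1 2) fps_section_decomposition[where m = m]) auto
  also have "\<dots> = (\<Sum>i<m. \<Sum>j<m.
      fps_X ^ (i + j) * fps_dilate m (fps_section m i A * fps_section m j B))"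
    using assms by (simp add: sum_product fps_dilate_mult power_add mult_ac)
  finally show ?thesis
    using assms by (simp add: fps_section_sum fps_section_X_power_mult_dilate)
qed

lemma fps_section_mult_dilate:
  fixes A C :: "'a::comm_semiring_1 fps"
  assumes "r < m"
  shows "fps_section m r (A * fps_dilate m C) = fps_section m r A * C"
proof -
  have "A * fps_dilate m C = (\<Sum>i<m. fps_X ^ i * fps_dilate m (fps_section m i A * C))"
    using assms by (subst fps_section_decomposition[where m = m])
      (auto simp: sum_distrib_left sum_distrib_right fps_dilate_mult mult_ac)
  then show ?thesis
    using assms by (simp add: fps_section_sum fps_section_X_power_mult_dilate)
qed

lemma fps_cutoff_mult_cong:
  fixes f f' g g' :: "'a::comm_semiring_1 fps"
  assumes "fps_cutoff n f = fps_cutoff n f'" and "fps_cutoff n g = fps_cutoff n g'"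
  shows "fps_cutoff n (f * g) = fps_cutoff n (f' * g')"
proof -
  have "(f * g) $ k = (f' * g') $ k" if "k < n" for k
    using fps_cutoff_left_mult_nth[OF that, of f g] fps_cutoff_left_mult_nth[OF that, of f' g]
      fps_cutoff_right_mult_nth[OF that, of f' g] fps_cutoff_right_mult_nth[OF that, of f' g']
      assms by simp
  then show ?thesis
    by (simp add: fps_cutoff_eq_fps_cutoff_iff)
qed

lemma fps_cutoff_power_cong:
  fixes f g :: "'a::comm_semiring_1 fps"
  assumes "fps_cutoff n f = fps_cutoff n g"
  shows "fps_cutoff n (f ^ k) = fps_cutoff n (g ^ k)"
  by (induction k) (simp_all add: fps_cutoff_mult_cong[OF assms])

lemma fps_prod_nth_0: "(\<Prod>k\<in>A. F k) $ 0 = (\<Prod>k\<in>A. F k $ 0 :: 'a::comm_semiring_1)"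
  by (induction A rule: infinite_finite_induct) simp_all

lemma fps_power_char_eq_dilate:
  fixes A :: "'a::comm_ring_1 fps"
  assumes "prime p" and "CHAR('a) = p" and "\<And>x::'a. x ^ p = x"
  shows "A ^ p = fps_dilate p A"
proof (rule fps_ext)
  fix n
  \<comment> \<open>Freshman's dream on a polynomial truncation of \<open>A\<close>.\<close>
  define B where "B = (\<Sum>i\<le>n. fps_const (A $ i) * fps_X ^ i)"
  have "fps_cutoff (Suc n) B = fps_cutoff (Suc n) A"
    by (simp add: fps_cutoff_eq_fps_cutoff_iff B_def fps_sum_nth if_distrib[of "\<lambda>x. _ * x"]
        cong: if_cong)
  then have "(A ^ p) $ n = (B ^ p) $ n"
    using fps_cutoff_power_cong by (metis fps_cutoff_eq_fps_cutoff_iff lessI)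
  also have "B ^ p = (\<Sum>i\<le>n. fps_const (A $ i) * fps_X ^ (p * i))"
    using assms unfolding B_def
    by (subst freshmans_dream_sum) (simp_all add: power_mult_distrib power_mult mult.commute)
  also have "\<dots> $ n = fps_dilate p A $ n"
    using assms by (auto simp: fps_sum_nth if_distrib[of "\<lambda>x. _ * x"] cong: if_cong
        elim!: dvdE intro!: sum.neutral dest: prime_gt_0_nat)
  finally show "(A ^ p) $ n = fps_dilate p A $ n" .
qed

lemma mod_5_power_5 [simp]: "(x :: 5) ^ 5 = x"
proof (induction x)
  case (of_int z)
  then have "z \<in> {0, 1, 2, 3, 4}"
    by auto
  then show ?case
    by (auto simp flip: of_int_power)
qed

lemma fps_mod_5_power_5: "(A :: 5 fps) ^ 5 = fps_dilate 5 A"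
  by (rule fps_power_char_eq_dilate) auto

section \<open>Generating series of weighted sets\<close>

definition counting_fps :: "'b set \<Rightarrow> ('b \<Rightarrow> nat) \<Rightarrow> 'a::comm_semiring_1 fps" where
  "counting_fps A w = Abs_fps (\<lambda>n. of_nat (card {x \<in> A. w x = n}))"

lemma counting_fps_nth [simp]: "counting_fps A w $ n = of_nat (card {x \<in> A. w x = n})"
  by (simp add: counting_fps_def)

lemma counting_fps_empty [simp]: "counting_fps {} w = 0"
  by (rule fps_ext) simp

lemma counting_fps_mult:
  assumes "\<And>n. finite {x \<in> A. w x = n}" and "\<And>n. finite {y \<in> B. v y = n}"
  shows "counting_fps A w * counting_fps B v
           = (counting_fps (A \<times> B) (\<lambda>(x, y). w x + v y) :: 'a::comm_semiring_1 fps)"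
proof (rule fps_ext)
  fix n
  have fibre: "{p \<in> A \<times> B. (\<lambda>(x, y). w x + v y) p = n}
      = (\<Union>i\<in>{0..n}. {x \<in> A. w x = i} \<times> {y \<in> B. v y = n - i})"
  proof (intro set_eqI iffI)
    fix p assume "p \<in> {p \<in> A \<times> B. (\<lambda>(x, y). w x + v y) p = n}"
    then show "p \<in> (\<Union>i\<in>{0..n}. {x \<in> A. w x = i} \<times> {y \<in> B. v y = n - i})"
      by (intro UN_I[of "w (fst p)"]) auto
  qed auto
  have "card {p \<in> A \<times> B. (\<lambda>(x, y). w x + v y) p = n}
      = (\<Sum>i=0..n. card {x \<in> A. w x = i} * card {y \<in> B. v y = n - i})"
    unfolding fibre using assms by (subst card_UN_disjoint) (auto simp: card_cartesian_product)
  then show "(counting_fps A w * counting_fps B v :: 'a fps) $ n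
      = counting_fps (A \<times> B) (\<lambda>(x, y). w x + v y) $ n"
    by (simp add: fps_mult_nth)
qed

lemma counting_fps_bij_betw:
  assumes "bij_betw f A B" and "\<And>x. x \<in> A \<Longrightarrow> v (f x) = w x"
  shows "counting_fps A w = counting_fps B v"
proof (rule fps_ext)
  fix n
  have "{y \<in> B. v y = n} = f ` {x \<in> A. w x = n}"
    using assms by (auto simp: bij_betw_def)
  moreover have "inj_on f {x \<in> A. w x = n}"
    using assms(1) by (auto simp: bij_betw_def intro: inj_on_subset)
  ultimately show "counting_fps A w $ n = counting_fps B v $ n"
    by (simp add: card_image)
qed

lemma counting_fps_cong:
  "(\<And>x. x \<in> A \<Longrightarrow> w x = v x) \<Longrightarrow> counting_fps A w = counting_fps A v"
  by (rule counting_fps_bij_betw[of id]) (auto simp: eq_commute)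

lemma counting_fps_Un:
  assumes "A \<inter> B = {}" and "\<And>n. finite {x \<in> A. w x = n}" and "\<And>n. finite {x \<in> B. w x = n}"
  shows "counting_fps (A \<union> B) w = counting_fps A w + counting_fps B w"
proof (rule fps_ext)
  fix n
  have "{x \<in> A \<union> B. w x = n} = {x \<in> A. w x = n} \<union> {x \<in> B. w x = n}"
    by auto
  then show "counting_fps (A \<union> B) w $ n = (counting_fps A w + counting_fps B w) $ n"
    using assms by (simp add: card_Un_disjoint disjoint_iff)
qed

lemma fps_X_mult_counting_fps: "fps_X * counting_fps A w = counting_fps A (\<lambda>x. Suc (w x))"
proof (rule fps_ext)
  fix n
  show "(fps_X * counting_fps A w) $ n = counting_fps A (\<lambda>x. Suc (w x)) $ n"
    by (cases n) (simp_all add: fps_X_mult_nth)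
qed

lemma fps_dilate_counting_fps:
  assumes "m > 0"
  shows "fps_dilate m (counting_fps A w) = counting_fps A (\<lambda>x. m * w x)"
proof (rule fps_ext)
  fix n
  have "{x \<in> A. m * w x = n} = (if m dvd n then {x \<in> A. w x = n div m} else {})"
    using assms by auto
  then show "fps_dilate m (counting_fps A w) $ n = counting_fps A (\<lambda>x. m * w x) $ n"
    by simp
qed

lemma fps_section_counting_fps:
  assumes "r < m"
  shows "fps_section m r (counting_fps A w) = counting_fps {x \<in> A. w x mod m = r} (\<lambda>x. w x div m)"
proof (rule fps_ext)
  fix n
  have "w x = m * n + r \<longleftrightarrow> w x mod m = r \<and> w x div m = n" for x
    using assms div_mult_mod_eq[of "w x" m] by (auto simp: mult.commute)
  then have "{x \<in> A. w x = m * n + r} = {x \<in> {x \<in> A. w x mod m = r}. w x div m = n}"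
    by auto
  then show "fps_section m r (counting_fps A w) $ n
      = counting_fps {x \<in> A. w x mod m = r} (\<lambda>x. w x div m) $ n"
    by simp
qed

section \<open>Ramanujan's theta function and its 5-dissection\<close>

lemma nat_square_mod_5:
  fixes k :: int
  shows "nat (k^2) mod 5 = (if k mod 5 = 0 then 0 else if k mod 5 \<in> {1, 4} then 1 else 4)"
proof -
  have "nat (k^2) mod 5 = nat ((k mod 5)^2 mod 5)"
    by (simp add: nat_mod_distrib power_mod)
  moreover have "k mod 5 \<in> {0, 1, 2, 3, 4}"
    by auto
  ultimately show ?thesis
    by auto
qed

lemma abs_le_square_int: "\<bar>k\<bar> \<le> (k::int)^2"
proof (cases "k = 0")
  case False
  then have "\<bar>k\<bar> * 1 \<le> \<bar>k\<bar> * \<bar>k\<bar>"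
    by (intro mult_left_mono) auto
  then show ?thesis
    by (simp add: power2_eq_square abs_mult_self_eq)
qed simp

lemma finite_int_square_le: "finite {k::int. nat (k^2) \<le> n}"
proof (rule finite_subset)
  show "{k::int. nat (k^2) \<le> n} \<subseteq> {- int n..int n}"
  proof
    fix k :: int
    assume "k \<in> {k. nat (k^2) \<le> n}"
    with abs_le_square_int[of k] show "k \<in> {- int n..int n}"
      by auto
  qed
qed simp

definition theta :: "'a::comm_semiring_1 fps" where
  "theta = counting_fps (UNIV :: int set) (\<lambda>k. nat (k^2))"

lemma nat_square_times_5: "nat ((5 * k)^2) = 25 * nat ((k::int)^2)"
  by (simp add: power_mult_distrib nat_mult_distrib)

lemma theta_section_0: "fps_section 5 0 theta = fps_dilate 5 theta"
proof -
  have "bij_betw (\<lambda>j. 5 * j) UNIV {k::int \<in> UNIV. nat (k^2) mod 5 = 0}"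
  proof (rule bij_betwI')
    fix k :: int
    assume "k \<in> {k \<in> UNIV. nat (k^2) mod 5 = 0}"
    then have "k = 5 * (k div 5)"
      using nat_square_mod_5[of k] by (auto split: if_splits)
    then show "\<exists>j\<in>UNIV. k = 5 * j"
      by blast
  qed (auto simp: power_mult_distrib nat_mult_distrib)
  then have "counting_fps {k::int \<in> UNIV. nat (k^2) mod 5 = 0} (\<lambda>k. nat (k^2) div 5)
      = counting_fps UNIV (\<lambda>j. 5 * nat (j^2))"
    by (rule counting_fps_bij_betw[symmetric]) (simp add: nat_square_times_5)
  then show ?thesis
    by (simp add: theta_def fps_section_counting_fps fps_dilate_counting_fps)
qed

lemma theta_section_2_3:
  assumes "r = 2 \<or> r = 3"
  shows "fps_section 5 r theta = 0"
proof -
  have "{k::int \<in> UNIV. nat (k^2) mod 5 = r} = {}"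
    using assms nat_square_mod_5 by (auto split: if_splits)
  with assms show ?thesis
    by (auto simp: theta_def fps_section_counting_fps)
qed

(* (u, v) |-> (u + 2v, 2u - v) is u + vi |-> (u + vi)(2 + i) with the coordinates read in
   reverse order; swapping them once more when needed normalises the residues of the image. *)
fun norm5_lift :: "int \<times> int \<Rightarrow> int \<times> int" where
  "norm5_lift (u, v) =
     (if (u + 2*v) mod 5 \<in> {2, 3} then (2*u - v, u + 2*v) else (u + 2*v, 2*u - v))"

fun norm5_lower :: "int \<times> int \<Rightarrow> int \<times> int" where
  "norm5_lower (x, y) =
     (if (y - 2*x) mod 5 = 0 then ((x + 2*y) div 5, (2*x - y) div 5)
      else ((2*x + y) div 5, (2*y - x) div 5))"

lemma norm5_lift_norm:
  assumes "norm5_lift (u, v) = (x, y)"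
  shows "x^2 + y^2 = 5 * (u^2 + v^2)"
proof -
  have "(x = 2*u - v \<and> y = u + 2*v) \<or> (x = u + 2*v \<and> y = 2*u - v)"
    using assms by (auto split: if_splits)
  then show ?thesis
    by (elim disjE conjE; hypsubst; simp add: power2_eq_square algebra_simps)
qed

lemma norm5_lower_lift: "norm5_lower (norm5_lift p) = p"
proof (cases p)
  case (Pair u v)
  show ?thesis
  proof (cases "(u + 2*v) mod 5 \<in> {2, 3}")
    case True
    then have "((u + 2*v) - 2*(2*u - v)) mod 5 \<noteq> 0"
      by auto presburger+
    moreover have "2*(2*u - v) + (u + 2*v) = 5 * u" "2*(u + 2*v) - (2*u - v) = 5 * v"
      by simp_all
    ultimately show ?thesis
      using True Pair by (simp only: norm5_lift.simps norm5_lower.simps if_True if_False) simp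
  next
    case False
    have "((2*u - v) - 2*(u + 2*v)) mod 5 = 0"
      by presburger
    moreover have "(u + 2*v) + 2*(2*u - v) = 5 * u" "2*(u + 2*v) - (2*u - v) = 5 * v"
      by simp_all
    ultimately show ?thesis
      using False Pair by (simp only: norm5_lift.simps norm5_lower.simps if_True if_False) simp
  qed
qed

lemma norm5_lift_lower:
  assumes "(x mod 5 = 0 \<and> y mod 5 = 0) \<or> (x mod 5 \<in> {1, 4} \<and> y mod 5 \<in> {2, 3})"
  shows "norm5_lift (norm5_lower (x, y)) = (x, y)"
proof (cases "(y - 2*x) mod 5 = 0")
  case True
  have "5 dvd (x + 2*y)" "5 dvd (2*x - y)"
    using True by presburger+
  then obtain u v where u: "x + 2*y = 5 * u" and v: "2*x - y = 5 * v"
    by (auto elim!: dvdE)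
  have "norm5_lower (x, y) = (u, v)"
    using True u v by simp
  moreover have "u + 2*v = x" "2*u - v = y"
    using u v by linarith+
  moreover have "x mod 5 \<notin> {2, 3}"
    using assms by auto
  ultimately show ?thesis
    by simp
next
  case False
  have "y mod 5 \<in> {2, 3}"
    using assms False by auto
  have "(x mod 5 = 1 \<and> y mod 5 = 3) \<or> (x mod 5 = 4 \<and> y mod 5 = 2)"
    using assms False by (auto; presburger)
  then have "5 dvd (2*x + y)" "5 dvd (2*y - x)"
    by presburger+
  then obtain u v where u: "2*x + y = 5 * u" and v: "2*y - x = 5 * v"
    by (auto elim!: dvdE)
  have "norm5_lower (x, y) = (u, v)"
    using False u v by simp
  moreover have "u + 2*v = y" "2*u - v = x"
    using u v by linarith+
  ultimately show ?thesis
    using \<open>y mod 5 \<in> {2, 3}\<close> by simp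
qed

lemma norm5_lift_residues:
  obtains "fst (norm5_lift p) mod 5 = 0" "snd (norm5_lift p) mod 5 = 0"
  | "fst (norm5_lift p) mod 5 \<in> {1, 4}" "snd (norm5_lift p) mod 5 \<in> {2, 3}"
proof (cases p)
  case (Pair u v)
  define x y where "x = u + 2*v" and "y = 2*u - v"
  have "(y - 2*x) mod 5 = 0"
    unfolding x_def y_def by presburger
  then have "x mod 5 = 0 \<and> y mod 5 = 0 \<or> x mod 5 = 1 \<and> y mod 5 = 2 \<or> x mod 5 = 4 \<and> y mod 5 = 3
      \<or> x mod 5 = 2 \<and> y mod 5 = 4 \<or> x mod 5 = 3 \<and> y mod 5 = 1"
    by presburger
  then show ?thesis
    using that by (auto simp: Pair x_def[symmetric] y_def[symmetric])
qed

lemma bij_betw_norm5_lift: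
  "bij_betw norm5_lift UNIV
     ({(x, y). x mod 5 = 0 \<and> y mod 5 = 0} \<union> {(x, y). x mod 5 \<in> {1, 4} \<and> y mod 5 \<in> {2, 3}})"
proof (rule bij_betw_byWitness[where f' = norm5_lower])
  show "norm5_lift ` UNIV \<subseteq> {(x, y). x mod 5 = 0 \<and> y mod 5 = 0}
      \<union> {(x, y). x mod 5 \<in> {1, 4} \<and> y mod 5 \<in> {2, 3}}"
  proof (rule image_subsetI)
    fix p
    obtain x y where "norm5_lift p = (x, y)"
      by (metis surj_pair)
    then show "norm5_lift p \<in> {(x, y). x mod 5 = 0 \<and> y mod 5 = 0}
        \<union> {(x, y). x mod 5 \<in> {1, 4} \<and> y mod 5 \<in> {2, 3}}"
      using norm5_lift_residues[of p] by (auto simp del: norm5_lift.simps)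
  qed
qed (auto simp del: norm5_lift.simps norm5_lower.simps intro: norm5_lower_lift norm5_lift_lower)

lemma finite_int_square_fibre:
  "(\<And>k. P k \<Longrightarrow> nat (k^2) \<le> n) \<Longrightarrow> finite {k::int. P k}"
  by (rule finite_subset[OF _ finite_int_square_le]) auto

lemma finite_int_square_fibres:
  "finite {k::int. nat (k^2) = n}" "finite {k::int. 5 * nat (k^2) = n}"
  "finite {k::int. nat (k^2) mod 5 = r \<and> nat (k^2) div 5 = n}"
  by (rule finite_int_square_fibre[where n = "5 * n + 4"]; auto)+

lemma counting_fps_multiples_of_5:
  "counting_fps {(x::int, y::int). x mod 5 = 0 \<and> y mod 5 = 0} (\<lambda>(x, y). (nat (x^2) + nat (y^2)) div 5)
     = (fps_dilate 5 theta ^ 2 :: 'a::comm_semiring_1 fps)"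
proof -
  have "bij_betw (\<lambda>(a, b). (5 * a, 5 * b)) UNIV {(x::int, y::int). x mod 5 = 0 \<and> y mod 5 = 0}"
  proof (rule bij_betwI')
    fix p :: "int \<times> int"
    assume "p \<in> {(x, y). x mod 5 = 0 \<and> y mod 5 = 0}"
    then show "\<exists>q\<in>UNIV. p = (\<lambda>(a, b). (5 * a, 5 * b)) q"
      by (intro bexI[of _ "(fst p div 5, snd p div 5)"]) auto
  qed auto
  then have "counting_fps UNIV (\<lambda>(a::int, b::int). 5 * nat (a^2) + 5 * nat (b^2))
      = (counting_fps {(x::int, y::int). x mod 5 = 0 \<and> y mod 5 = 0}
          (\<lambda>(x, y). (nat (x^2) + nat (y^2)) div 5) :: 'a fps)"
    by (rule counting_fps_bij_betw) (auto simp: power_mult_distrib nat_mult_distrib)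
  then show ?thesis
    unfolding theta_def power2_eq_square[of "fps_dilate _ _"]
    by (simp add: fps_dilate_counting_fps counting_fps_mult finite_int_square_fibres)
qed

lemma counting_fps_residues_1_4:
  "counting_fps {(x::int, y::int). x mod 5 \<in> {1, 4} \<and> y mod 5 \<in> {2, 3}}
       (\<lambda>(x, y). (nat (x^2) + nat (y^2)) div 5)
     = (fps_X * fps_section 5 1 theta * fps_section 5 4 theta :: 'a::comm_semiring_1 fps)"
proof -
  have S: "{(x::int, y::int). x mod 5 \<in> {1, 4} \<and> y mod 5 \<in> {2, 3}}
      = {k \<in> UNIV. nat (k^2) mod 5 = 1} \<times> {k \<in> UNIV. nat (k^2) mod 5 = 4}"
    by (auto simp: nat_square_mod_5 split: if_splits)
  have div_sum: "(a + b) div 5 = Suc (a div 5 + b div 5)" if "a mod 5 = 1" "b mod 5 = 4" for a b :: nat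
    using that by (simp add: div_add1_eq[of a b])
  have "counting_fps {(x::int, y::int). x mod 5 \<in> {1, 4} \<and> y mod 5 \<in> {2, 3}}
      (\<lambda>(x, y). (nat (x^2) + nat (y^2)) div 5)
      = (counting_fps ({k \<in> UNIV. nat (k^2) mod 5 = 1} \<times> {k \<in> UNIV. nat (k^2) mod 5 = 4})
          (\<lambda>p. Suc ((\<lambda>(x, y). nat (x^2) div 5 + nat (y^2) div 5) p)) :: 'a fps)"
    unfolding S by (rule counting_fps_cong) (auto simp: div_sum)
  also have "\<dots> = fps_X * (counting_fps {k \<in> UNIV. nat (k^2) mod 5 = 1} (\<lambda>k. nat (k^2) div 5)
      * counting_fps {k \<in> UNIV. nat (k^2) mod 5 = 4} (\<lambda>k. nat (k^2) div 5))"
    unfolding fps_X_mult_counting_fps[symmetric]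
    by (subst counting_fps_mult) (simp_all add: finite_int_square_fibres)
  finally show ?thesis
    by (simp add: theta_def fps_section_counting_fps mult.assoc)
qed

theorem theta_squared:
  "(theta :: 'a::comm_semiring_1 fps)^2
     = fps_dilate 5 theta ^ 2 + fps_X * fps_section 5 1 theta * fps_section 5 4 theta"
proof -
  define S0 where "S0 = {(x::int, y::int). x mod 5 = 0 \<and> y mod 5 = 0}"
  define S1 where "S1 = {(x::int, y::int). x mod 5 \<in> {1, 4} \<and> y mod 5 \<in> {2, 3}}"
  define w where "w = (\<lambda>(x::int, y::int). (nat (x^2) + nat (y^2)) div 5)"
  have "(theta :: 'a fps)^2 = counting_fps UNIV (\<lambda>(u::int, v::int). nat (u^2) + nat (v^2))"
    unfolding theta_def power2_eq_square[of "counting_fps _ _"]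
    by (subst counting_fps_mult) (simp_all add: finite_int_square_fibres)
  also have "\<dots> = counting_fps (S0 \<union> S1) w"
  proof (rule counting_fps_bij_betw[OF bij_betw_norm5_lift[folded S0_def S1_def]])
    fix p :: "int \<times> int"
    obtain x y u v where "p = (u, v)" "norm5_lift p = (x, y)"
      by (metis surj_pair)
    then have "nat (x^2) + nat (y^2) = 5 * (nat (u^2) + nat (v^2))"
      using norm5_lift_norm[of u v x y] by (simp flip: nat_add_distrib)
    then show "w (norm5_lift p) = (\<lambda>(u, v). nat (u^2) + nat (v^2)) p"
      using \<open>p = (u, v)\<close> \<open>norm5_lift p = (x, y)\<close> by (simp add: w_def)
  qed
  also have "\<dots> = counting_fps S0 w + counting_fps S1 w"
  proof (rule counting_fps_Un)
    have "finite {p \<in> S. w p = n}" for S n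
      by (rule finite_subset[of _ "{k. nat (k^2) \<le> 5 * n + 4} \<times> {k. nat (k^2) \<le> 5 * n + 4}"])
        (auto simp: w_def finite_int_square_le)
    then show "finite {p \<in> S0. w p = n}" "finite {p \<in> S1. w p = n}" for n
      by blast+
  qed (auto simp: S0_def S1_def)
  finally show ?thesis
    unfolding S0_def S1_def w_def counting_fps_multiples_of_5 counting_fps_residues_1_4 .
qed

section \<open>The theta function in characteristic 5\<close>

lemma sum_lessThan_5: "(\<Sum>i<5::nat. f i) = f 0 + f 1 + f 2 + f 3 + f 4"
  by (simp add: eval_nat_numeral add_ac)

locale theta_mod_5 =
  fixes T :: "'a::comm_ring_1 fps"
  assumes char_5: "(5 :: 'a fps) = 0"
    and section_0: "fps_section 5 0 T = fps_dilate 5 T"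
    and section_2: "fps_section 5 2 T = 0"
    and section_3: "fps_section 5 3 T = 0"
    and square: "T^2 = fps_dilate 5 T ^ 2 + fps_X * fps_section 5 1 T * fps_section 5 4 T"
begin

lemma section_square:
  defines "a \<equiv> fps_dilate 5 T" and "b \<equiv> fps_section 5 1 T" and "c \<equiv> fps_section 5 4 T"
  shows "fps_section 5 0 (T^2) = a^2 + 2 * fps_X * b * c"
    and "fps_section 5 1 (T^2) = 2 * a * b"
    and "fps_section 5 2 (T^2) = b^2"
    and "fps_section 5 3 (T^2) = fps_X * c^2"
    and "fps_section 5 4 (T^2) = 2 * a * c"
  using section_0 section_2 section_3
  by (simp_all add: power2_eq_square fps_section_mult sum_lessThan_5 assms algebra_simps)

lemma section_cube:
  defines "a \<equiv> fps_dilate 5 T" and "b \<equiv> fps_section 5 1 T" and "c \<equiv> fps_section 5 4 T"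
  shows "fps_section 5 0 (T^3) = a * T^2"
    and "fps_section 5 1 (T^3) = 3 * b * T^2"
    and "fps_section 5 4 (T^3) = 3 * c * T^2"
proof -
  note sections = section_0 section_2 section_3 section_square[folded assms]
  have T3: "T^3 = T^2 * T"
    by (simp add: power2_eq_square power3_eq_cube)
  have "fps_section 5 0 (T^3) = a * (a^2 + fps_X * b * c) + 5 * (fps_X * a * b * c)"
    unfolding T3 by (simp add: fps_section_mult sum_lessThan_5 sections assms algebra_simps
        power2_eq_square power3_eq_cube)
  then show "fps_section 5 0 (T^3) = a * T^2"
    by (simp add: char_5 square assms)
  have "fps_section 5 1 (T^3) = 3 * b * (a^2 + fps_X * b * c)"
    unfolding T3 by (simp add: fps_section_mult sum_lessThan_5 sections assms algebra_simps
        power2_eq_square)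
  then show "fps_section 5 1 (T^3) = 3 * b * T^2"
    by (simp add: square assms)
  have "fps_section 5 4 (T^3) = 3 * c * (a^2 + fps_X * b * c)"
    unfolding T3 by (simp add: fps_section_mult sum_lessThan_5 sections assms algebra_simps
        power2_eq_square)
  then show "fps_section 5 4 (T^3) = 3 * c * T^2"
    by (simp add: square assms)
qed

lemma section_0_fourth_power: "fps_section 5 0 (T^4) = T^4"
proof -
  define a b c where "a = fps_dilate 5 T" and "b = fps_section 5 1 T" and "c = fps_section 5 4 T"
  note sections = section_0 section_2 section_3 section_cube[folded a_def b_def c_def]
    section_cube(2)[folded a_def b_def c_def, unfolded One_nat_def]
  have T4: "T^4 = T^3 * T"
    by (simp add: power_Suc2[symmetric] eval_nat_numeral)
  have "fps_section 5 0 (T^4) = T^2 * (a^2 + fps_X * b * c) + 5 * (fps_X * b * c * T^2)"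
    unfolding T4 by (simp add: fps_section_mult sum_lessThan_5 sections a_def b_def c_def
        algebra_simps power2_eq_square)
  also have "\<dots> = T^2 * T^2"
    by (simp add: char_5 square a_def b_def c_def)
  finally show ?thesis
    by (simp flip: power_add)
qed

lemma section_0_inverse:
  assumes inverse: "G * T = 1" and frobenius: "T^5 = fps_dilate 5 T"
  shows "fps_section 5 0 G = T^3"
proof -
  have "T^4 = T^4 * (G * T)"
    using inverse by simp
  also have "\<dots> = G * T^5"
    by (simp add: algebra_simps eval_nat_numeral)
  finally have "T^4 = fps_section 5 0 G * T"
    using section_0_fourth_power by (metis frobenius fps_section_mult_dilate zero_less_numeral)
  then have "fps_section 5 0 G * (G * T) = T^3 * (G * T)"
    by (simp add: algebra_simps eval_nat_numeral)
  then show ?thesis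
    using inverse by simp
qed

lemma section_00_cube: "fps_section 5 0 (fps_section 5 0 (T^3)) = 2 * T^3 - T * fps_dilate 5 (T^2)"
proof -
  define a b c where "a = fps_dilate 5 T" and "b = fps_section 5 1 T" and "c = fps_section 5 4 T"
  have "fps_section 5 0 (fps_section 5 0 (T^3)) = fps_section 5 0 (T^2 * a)"
    by (simp add: section_cube a_def mult.commute)
  also have "\<dots> = (a^2 + 2 * fps_X * b * c) * T"
    by (simp add: a_def b_def c_def fps_section_mult_dilate section_square)
  also have "\<dots> = 2 * (T^2 * T) - T * a^2"
    by (simp add: square a_def b_def c_def algebra_simps)
  also have "\<dots> = 2 * T^3 - T * a^2"
    by (simp add: power2_eq_square power3_eq_cube)
  finally show ?thesis
    by (simp add: a_def fps_dilate_power)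
qed

lemma cube_coeff_25_times:
  assumes "r = 1 \<or> r = 4"
  shows "(T^3) $ (25 * (5 * n + r)) = 0"
proof -
  define F where "F = fps_section 5 0 (fps_section 5 0 (T^3))"
  have "fps_section 5 r F = 2 * fps_section 5 r (T^3) - fps_section 5 r T * T^2"
    using assms by (auto simp: F_def section_00_cube fps_section_diff fps_section_mult_dilate
        fps_section_numeral_mult)
  also have "\<dots> = 5 * (fps_section 5 r T * T^2)"
    using assms by (auto simp: section_cube section_cube[unfolded One_nat_def] algebra_simps)
  finally have "fps_section 5 r F = 0"
    by (simp add: char_5)
  then have "fps_section 5 r F $ n = 0"
    by simp
  then show ?thesis
    by (simp add: F_def algebra_simps)
qed

lemma cube_coeff_125_times: "(T^3) $ (125 * n) = (T^3) $ (5 * n)"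
proof -
  have "fps_section 5 0 (fps_section 5 0 (fps_section 5 0 (T^3)))
      = 2 * fps_section 5 0 (T^3) - fps_section 5 0 T * T^2"
    by (simp add: section_00_cube fps_section_diff fps_section_mult_dilate fps_section_numeral_mult)
  also have "\<dots> = fps_section 5 0 (T^3)"
    by (simp add: section_cube section_0 algebra_simps)
  finally have "fps_section 5 0 (fps_section 5 0 (fps_section 5 0 (T^3))) = fps_section 5 0 (T^3)" .
  then have "fps_section 5 0 (fps_section 5 0 (fps_section 5 0 (T^3))) $ n = fps_section 5 0 (T^3) $ n"
    by simp
  then show ?thesis
    by (simp add: algebra_simps)
qed

lemma cube_coeff_vanishing:
  assumes "r = 1 \<or> r = 4" and "k \<ge> 1"
  shows "(T^3) $ (25 ^ k * (5 * n + r)) = 0"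
  using assms(2)
proof (induction k rule: dec_induct)
  case base
  show ?case
    using cube_coeff_25_times[OF assms(1)] by simp
next
  case (step k)
  define m where "m = 5 * n + r"
  obtain j where "k = Suc j"
    using step.hyps by (cases k) auto
  then have "25 ^ Suc k * m = 125 * (5 * (25 ^ j * m))" and "25 ^ k * m = 5 * (5 * (25 ^ j * m))"
    by simp_all
  then show ?case
    using step.IH cube_coeff_125_times by (simp only: m_def)
qed

end

section \<open>Overpartitions with bounded parts\<close>

lemma part_le_sum_mset: "x \<in># M \<Longrightarrow> x \<le> sum_mset (M :: nat multiset)"
  by (metis sum_mset.remove le_add1)

lemma size_le_sum_mset: "(\<forall>x\<in>#M. 0 < (x::nat)) \<Longrightarrow> size M \<le> sum_mset M"
  by (induction M) auto

lemma mult_count_le_sum_mset: "a * count M a \<le> sum_mset (M :: nat multiset)"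
proof -
  have "replicate_mset (count M a) a \<subseteq># M"
    by (simp add: count_le_replicate_mset_subset_eq[symmetric])
  then obtain C where C: "M = replicate_mset (count M a) a + C"
    by (auto simp: subset_mset.le_iff_add)
  have "sum_mset M = sum_mset (replicate_mset (count M a) a + C)"
    using C by (rule arg_cong)
  then have "sum_mset M = count M a * a + sum_mset C"
    by simp
  then show ?thesis
    by simp
qed

lemma finite_overpartitions: "finite (overpartitions n)"
proof (rule finite_subset)
  show "overpartitions n \<subseteq> (\<Union>s\<in>{0..n}. multisets_of_size {1..n} s) \<times> Pow {1..n}"
  proof
    fix p
    assume "p \<in> overpartitions n"
    then obtain M S where p: "p = (M, S)" "\<forall>x\<in>#M. 0 < x" "sum_mset M = n" "S \<subseteq> set_mset M"
      by (auto simp: overpartitions_def)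
    then have "size M \<le> n" "set_mset M \<subseteq> {1..n}"
      using size_le_sum_mset[of M] part_le_sum_mset[of _ M] by fastforce+
    then show "p \<in> (\<Union>s\<in>{0..n}. multisets_of_size {1..n} s) \<times> Pow {1..n}"
      using p by (auto simp: multisets_of_size_def)
  qed
qed (auto intro: finite_multisets_of_size)

definition overpartitions_le :: "nat \<Rightarrow> nat \<Rightarrow> (nat multiset \<times> nat set) set" where
  "overpartitions_le m n = {(M, S) \<in> overpartitions n. \<forall>x\<in>#M. x \<le> m}"

lemma finite_overpartitions_le: "finite (overpartitions_le m n)"
  by (rule finite_subset[OF _ finite_overpartitions]) (auto simp: overpartitions_le_def)

lemma overpartitions_le_self: "n \<le> m \<Longrightarrow> overpartitions_le m n = overpartitions n"
  using part_le_sum_mset by (fastforce simp: overpartitions_le_def overpartitions_def)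

lemma overpartitions_le_0: "overpartitions_le 0 n = (if n = 0 then {({#}, {})} else {})"
proof -
  have "overpartitions_le 0 n \<subseteq> {({#}, {})}"
  proof
    fix p
    assume p: "p \<in> overpartitions_le 0 n"
    obtain M S where "p = (M, S)"
      by fastforce
    with p have "M = {#}" and "S \<subseteq> set_mset M"
      unfolding overpartitions_le_def overpartitions_def
      by (metis (no_types, lifting) case_prodD mem_Collect_eq multiset_nonemptyE not_le)+
    with \<open>p = (M, S)\<close> show "p \<in> {({#}, {})}"
      by simp
  qed
  moreover have "({#}, {}) \<in> overpartitions_le 0 n \<longleftrightarrow> n = 0"
    by (auto simp: overpartitions_le_def overpartitions_def)
  ultimately show ?thesis
    by auto
qed

lemma overpartitions_le_remove_largest:
  assumes "(M, S) \<in> overpartitions_le (Suc m) n"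
  shows "(M - replicate_mset (count M (Suc m)) (Suc m), S - {Suc m})
           \<in> overpartitions_le m (n - Suc m * count M (Suc m))"
proof -
  let ?R = "replicate_mset (count M (Suc m)) (Suc m)"
  have M: "\<forall>x\<in>#M. 0 < x \<and> x \<le> Suc m" "sum_mset M = n" "S \<subseteq> set_mset M"
    using assms by (auto simp: overpartitions_le_def overpartitions_def)
  have "?R \<subseteq># M"
    by (simp add: count_le_replicate_mset_subset_eq[symmetric])
  then have "n = sum_mset (M - ?R + ?R)"
    using M(2) by (simp add: subset_mset.diff_add)
  then have "sum_mset (M - ?R) = n - Suc m * count M (Suc m)"
    by simp
  moreover have "0 < x \<and> x \<le> m" if "x \<in># M - ?R" for x
  proof -
    have "count (M - ?R) (Suc m) = 0"
      by simp
    with that have "x \<noteq> Suc m"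
      by (metis count_eq_zero_iff)
    moreover have "x \<in># M"
      using that by (rule in_diffD)
    ultimately show ?thesis
      using M(1) by fastforce
  qed
  moreover have "S - {Suc m} \<subseteq> set_mset (M - ?R)"
    using M(3) by (auto simp: in_diff_count split: if_split_asm)
  ultimately show ?thesis
    by (auto simp: overpartitions_le_def overpartitions_def)
qed

lemma overpartitions_le_add_largest:
  assumes "(M, S) \<in> overpartitions_le m (n - Suc m * j)" and "j \<ge> 1" and "Suc m * j \<le> n"
  shows "(M + replicate_mset j (Suc m), if b then insert (Suc m) S else S) \<in> overpartitions_le (Suc m) n"
    and "count (M + replicate_mset j (Suc m)) (Suc m) = j"
proof -
  have "count M (Suc m) = 0"
    using assms(1) by (auto simp: overpartitions_le_def count_eq_zero_iff)
  then show "count (M + replicate_mset j (Suc m)) (Suc m) = j"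
    by simp
  show "(M + replicate_mset j (Suc m), if b then insert (Suc m) S else S) \<in> overpartitions_le (Suc m) n"
    using assms by (auto simp: overpartitions_le_def overpartitions_def)
qed

lemma card_overpartitions_le_count_largest:
  assumes "j \<ge> 1" and "Suc m * j \<le> n"
  shows "card {p \<in> overpartitions_le (Suc m) n. count (fst p) (Suc m) = j}
           = 2 * card (overpartitions_le m (n - Suc m * j))"
proof -
  let ?R = "replicate_mset j (Suc m)" and ?B = "overpartitions_le m (n - Suc m * j) \<times> (UNIV :: bool set)"
  define remove where "remove p = ((fst p - ?R, snd p - {Suc m}), Suc m \<in> snd p)"
    for p :: "nat multiset \<times> nat set"
  define add where "add q = (fst (fst q) + ?R, if snd q then insert (Suc m) (snd (fst q)) else snd (fst q))"
    for q :: "(nat multiset \<times> nat set) \<times> bool"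
  have "bij_betw remove {p \<in> overpartitions_le (Suc m) n. count (fst p) (Suc m) = j} ?B"
  proof (rule bij_betw_byWitness[where f' = add])
    show "\<forall>p\<in>{p \<in> overpartitions_le (Suc m) n. count (fst p) (Suc m) = j}. add (remove p) = p"
    proof
      fix p
      assume "p \<in> {p \<in> overpartitions_le (Suc m) n. count (fst p) (Suc m) = j}"
      then obtain M S where "p = (M, S)" "?R \<subseteq># M" "S \<subseteq> set_mset M"
        by (cases p) (auto simp: count_le_replicate_mset_subset_eq[symmetric] overpartitions_le_def
            overpartitions_def)
      then show "add (remove p) = p"
        by (auto simp: remove_def add_def subset_mset.diff_add)
    qed
    show "\<forall>q\<in>?B. remove (add q) = q"
    proof
      fix q
      assume "q \<in> ?B"
      then obtain M S b where "q = ((M, S), b)" "Suc m \<notin> S"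
        by (cases q) (fastforce simp: overpartitions_le_def overpartitions_def)
      then show "remove (add q) = q"
        by (auto simp: remove_def add_def)
    qed
    show "remove ` {p \<in> overpartitions_le (Suc m) n. count (fst p) (Suc m) = j} \<subseteq> ?B"
      using overpartitions_le_remove_largest by (auto simp: remove_def)
    show "add ` ?B \<subseteq> {p \<in> overpartitions_le (Suc m) n. count (fst p) (Suc m) = j}"
      using overpartitions_le_add_largest[OF _ assms] by (auto simp: add_def)
  qed
  then show ?thesis
    by (simp add: bij_betw_same_card card_cartesian_product)
qed

lemma overpartitions_le_without_largest:
  "{p \<in> overpartitions_le (Suc m) n. count (fst p) (Suc m) = 0} = overpartitions_le m n"
proof -
  have parts: "(\<forall>x\<in>#M. x \<le> Suc m) \<and> count M (Suc m) = 0 \<longleftrightarrow> (\<forall>x\<in>#M. x \<le> m)" for M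
    by (metis count_eq_zero_iff le_Suc_eq not_less_eq_eq)
  have "{p \<in> overpartitions_le (Suc m) n. count (fst p) (Suc m) = 0}
      = {(M, S) \<in> overpartitions n. (\<forall>x\<in>#M. x \<le> Suc m) \<and> count M (Suc m) = 0}"
    by (auto simp: overpartitions_le_def)
  also have "\<dots> = overpartitions_le m n"
    unfolding overpartitions_le_def parts ..
  finally show ?thesis .
qed

lemma card_overpartitions_le_fibre:
  assumes "i \<le> n"
  shows "card {p \<in> overpartitions_le (Suc m) n. Suc m * count (fst p) (Suc m) = i}
           = (if i = 0 then 1 else if Suc m dvd i then 2 else 0) * card (overpartitions_le m (n - i))"
proof (cases "Suc m dvd i")
  case True
  then obtain j where j: "i = Suc m * j"
    by (auto elim: dvdE)
  then have "{p \<in> overpartitions_le (Suc m) n. Suc m * count (fst p) (Suc m) = i}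
      = {p \<in> overpartitions_le (Suc m) n. count (fst p) (Suc m) = j}"
    unfolding j mult_cancel1 by simp
  then show ?thesis
    using card_overpartitions_le_count_largest[of j m n] overpartitions_le_without_largest assms j True
    by (cases "j = 0") simp_all
next
  case False
  then have empty: "{p \<in> overpartitions_le (Suc m) n. Suc m * count (fst p) (Suc m) = i} = {}"
    by (metis (mono_tags, lifting) dvd_triv_left empty_Collect_eq)
  show ?thesis
    unfolding empty using False by (cases "i = 0") auto
qed

lemma card_overpartitions_le_Suc:
  "card (overpartitions_le (Suc m) n) = (\<Sum>i=0..n.
     (if i = 0 then 1 else if Suc m dvd i then 2 else 0) * card (overpartitions_le m (n - i)))"
proof -
  define F where "F i = {p \<in> overpartitions_le (Suc m) n. Suc m * count (fst p) (Suc m) = i}" for i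
  have "overpartitions_le (Suc m) n = (\<Union>i\<in>{0..n}. F i)"
  proof (intro set_eqI iffI)
    fix p assume p: "p \<in> overpartitions_le (Suc m) n"
    then have "Suc m * count (fst p) (Suc m) \<le> n"
      using mult_count_le_sum_mset[of "Suc m" "fst p"]
      by (auto simp: overpartitions_le_def overpartitions_def)
    with p show "p \<in> (\<Union>i\<in>{0..n}. F i)"
      by (auto simp: F_def)
  qed (auto simp: F_def)
  moreover have "finite (F i)" for i
    by (rule finite_subset[OF _ finite_overpartitions_le]) (auto simp: F_def)
  moreover have "F i \<inter> F j = {}" if "i \<noteq> j" for i j
    using that by (auto simp: F_def)
  ultimately have "card (overpartitions_le (Suc m) n) = (\<Sum>i=0..n. card (F i))"
    by (simp add: card_UN_disjoint)
  also have "\<dots> = (\<Sum>i=0..n.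
      (if i = 0 then 1 else if Suc m dvd i then 2 else 0) * card (overpartitions_le m (n - i)))"
    unfolding F_def by (rule sum.cong[OF refl], rule card_overpartitions_le_fibre) simp
  finally show ?thesis .
qed

(* (1 + q^a) / (1 - q^a): overpartitions all of whose parts equal a. *)
definition overpartition_factor :: "nat \<Rightarrow> int fps" where
  "overpartition_factor a = Abs_fps (\<lambda>i. if i = 0 then 1 else if a dvd i then 2 else 0)"

lemma overpartition_factor_mult:
  assumes "a \<ge> 1"
  shows "overpartition_factor a * (1 - fps_X ^ a) = 1 + fps_X ^ a"
proof (rule fps_ext)
  fix n
  have "(overpartition_factor a * (1 - fps_X ^ a)) $ n
      = overpartition_factor a $ n - (if a \<le> n then overpartition_factor a $ (n - a) else 0)"
    by (simp add: algebra_simps fps_X_power_mult_right_nth)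
  moreover have "a dvd n \<longleftrightarrow> a dvd (n - a)" if "a \<le> n"
    using that by (simp add: dvd_minus_self)
  moreover have "\<not> a dvd n" if "n \<noteq> 0" "n < a"
    using that by (auto dest: dvd_imp_le)
  ultimately show "(overpartition_factor a * (1 - fps_X ^ a)) $ n = (1 + fps_X ^ a :: int fps) $ n"
    using assms by (auto simp: overpartition_factor_def)
qed

definition overpartitions_le_fps :: "nat \<Rightarrow> int fps" where
  "overpartitions_le_fps m = Abs_fps (\<lambda>n. int (card (overpartitions_le m n)))"

lemma overpartitions_le_fps_Suc:
  "overpartitions_le_fps (Suc m) = overpartitions_le_fps m * overpartition_factor (Suc m)"
proof (rule fps_ext)
  fix n
  have "(overpartitions_le_fps m * overpartition_factor (Suc m)) $ n
      = (\<Sum>i=0..n. overpartition_factor (Suc m) $ i * overpartitions_le_fps m $ (n - i))"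
    by (subst mult.commute) (simp add: fps_mult_nth)
  also have "\<dots> = overpartitions_le_fps (Suc m) $ n"
    by (simp add: overpartition_factor_def overpartitions_le_fps_def card_overpartitions_le_Suc
        of_nat_sum) (intro sum.cong; simp)
  finally show "overpartitions_le_fps (Suc m) $ n
      = (overpartitions_le_fps m * overpartition_factor (Suc m)) $ n" ..
qed

lemma overpartitions_le_fps_mult:
  "overpartitions_le_fps m * (\<Prod>k=1..m. 1 - fps_X ^ k) = (\<Prod>k=1..m. 1 + fps_X ^ k)"
proof (induction m)
  case 0
  have "overpartitions_le_fps 0 = 1"
    by (rule fps_ext) (simp add: overpartitions_le_fps_def overpartitions_le_0)
  then show ?case
    by simp
next
  case (Suc m)
  have "overpartitions_le_fps (Suc m) * (\<Prod>k=1..Suc m. 1 - fps_X ^ k)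
      = (overpartitions_le_fps m * (\<Prod>k=1..m. 1 - fps_X ^ k))
        * (overpartition_factor (Suc m) * (1 - fps_X ^ Suc m))"
    by (simp add: overpartitions_le_fps_Suc mult_ac)
  also have "\<dots> = (\<Prod>k=1..m. 1 + fps_X ^ k) * (1 + fps_X ^ Suc m)"
    by (simp only: Suc.IH overpartition_factor_mult[of "Suc m"] le_add1 plus_1_eq_Suc)
  also have "\<dots> = (\<Prod>k=1..Suc m. 1 + fps_X ^ k)"
    by (simp only: prod.cl_ivl_Suc) simp
  finally show ?case .
qed

section \<open>Gaussian binomials and the finite Jacobi triple product\<close>

definition q2_prod :: "nat \<Rightarrow> nat \<Rightarrow> int fps" where
  "q2_prod a b = (\<Prod>j\<in>{Suc a..b}. (1 - fps_X ^ (2*j)))"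

lemma q2_prod_same: "q2_prod a a = 1"
  by (simp add: q2_prod_def)

lemma q2_prod_Suc: "a \<le> b \<Longrightarrow> q2_prod a (Suc b) = q2_prod a b * (1 - fps_X ^ (2 * Suc b))"
  by (simp add: q2_prod_def)

lemma q2_prod_split: "a \<le> b \<Longrightarrow> b \<le> c \<Longrightarrow> q2_prod a b * q2_prod b c = q2_prod a c"
proof -
  assume "a \<le> b" "b \<le> c"
  then have "{Suc a..c} = {Suc a..b} \<union> {Suc b..c}"
    by auto
  then show ?thesis
    by (simp add: q2_prod_def prod.union_disjoint[symmetric] ivl_disj_int)
qed

lemma q2_prod_nonzero: "q2_prod a b \<noteq> 0"
proof
  assume "q2_prod a b = 0"
  then have "q2_prod a b $ 0 = 0"
    by simp
  then show False
    by (simp add: q2_prod_def fps_prod_nth_0)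
qed

fun q2_binom :: "nat \<Rightarrow> nat \<Rightarrow> int fps" where
  "q2_binom 0 k = (if k = 0 then 1 else 0)"
| "q2_binom (Suc m) 0 = 1"
| "q2_binom (Suc m) (Suc k) = q2_binom m k + fps_X ^ (2 * Suc k) * q2_binom m (Suc k)"

lemma q2_binom_0: "q2_binom m 0 = 1"
  by (cases m) auto

lemma q2_binom_eq_0: "m < k \<Longrightarrow> q2_binom m k = 0"
proof (induction m arbitrary: k)
  case 0
  then show ?case by simp
next
  case (Suc m)
  then obtain k' where "k = Suc k'" by (cases k) auto
  then show ?case using Suc by simp
qed

lemma one_minus_X_power_telescope:
  assumes "a + b = c"
  shows "(1 - fps_X ^ a) + (1 - fps_X ^ b) * fps_X ^ a = (1 - fps_X ^ c :: 'a::comm_ring_1 fps)"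
proof -
  have "fps_X ^ b * fps_X ^ a = (fps_X ^ c :: 'a fps)"
    using assms by (simp add: add.commute flip: power_add)
  then show ?thesis
    by (simp add: algebra_simps)
qed

lemma q2_prod_mult_q2_binom: "k \<le> m \<Longrightarrow> q2_prod 0 (m - k) * q2_binom m k = q2_prod k m"
proof (induction m arbitrary: k)
  case 0
  then show ?case
    by (simp add: q2_prod_same)
next
  case (Suc m)
  show ?case
  proof (cases k)
    case 0
    then show ?thesis
      by (simp add: q2_binom_0)
  next
    case (Suc j)
    show ?thesis
    proof (cases "j = m")
      case True
      then show ?thesis
        using Suc.IH[of m] \<open>k = Suc j\<close> by (simp add: q2_prod_same q2_binom_eq_0)
    next
      case False
      with Suc.prems \<open>k = Suc j\<close> have "j < m"
        by simp
      let ?P = "q2_prod (Suc j) m"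
      have split: "q2_prod 0 (m - j) = q2_prod 0 (m - Suc j) * (1 - fps_X ^ (2 * (m - j)))"
        using \<open>j < m\<close> q2_prod_Suc[of 0 "m - Suc j"] by (simp add: Suc_diff_Suc)
      have "q2_prod 0 (Suc m - k) * q2_binom (Suc m) k
          = q2_prod 0 (m - j) * q2_binom m j
            + q2_prod 0 (m - j) * fps_X ^ (2 * Suc j) * q2_binom m (Suc j)"
        using \<open>k = Suc j\<close> by (simp add: algebra_simps)
      also have "\<dots> = q2_prod 0 (m - j) * q2_binom m j
            + (1 - fps_X ^ (2 * (m - j))) * fps_X ^ (2 * Suc j)
              * (q2_prod 0 (m - Suc j) * q2_binom m (Suc j))"
        unfolding split by (simp only: mult_ac)
      also have "\<dots> = (1 - fps_X ^ (2 * Suc j)) * ?P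
          + (1 - fps_X ^ (2 * (m - j))) * fps_X ^ (2 * Suc j) * ?P"
        using Suc.IH[of j] Suc.IH[of "Suc j"] q2_prod_split[of j "Suc j" m] \<open>j < m\<close>
        by (simp add: q2_prod_def)
      also have "\<dots> = ?P * ((1 - fps_X ^ (2 * Suc j)) + (1 - fps_X ^ (2 * (m - j))) * fps_X ^ (2 * Suc j))"
        by (simp only: ring_distribs mult_ac)
      also have "(1 - fps_X ^ (2 * Suc j)) + (1 - fps_X ^ (2 * (m - j))) * fps_X ^ (2 * Suc j)
          = (1 - fps_X ^ (2 * Suc m) :: int fps)"
        using \<open>j < m\<close> by (intro one_minus_X_power_telescope) simp
      also have "?P * (1 - fps_X ^ (2 * Suc m)) = q2_prod k (Suc m)"
        using \<open>j < m\<close> \<open>k = Suc j\<close> by (simp add: q2_prod_Suc)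
      finally show ?thesis .
    qed
  qed
qed

lemma q2_binom_self: "q2_binom m m = 1"
  using q2_prod_mult_q2_binom[of m m] by (simp add: q2_prod_same)

lemma q2_binom_symmetric: "k \<le> m \<Longrightarrow> q2_binom m k = q2_binom m (m - k)"
proof -
  assume k: "k \<le> m"
  have a: "q2_prod 0 k * (q2_prod 0 (m - k) * q2_binom m k) = q2_prod 0 m"
    using q2_prod_mult_q2_binom[OF k] q2_prod_split[of 0 k m] k by simp
  have b: "q2_prod 0 (m - k) * (q2_prod 0 k * q2_binom m (m - k)) = q2_prod 0 m"
    using q2_prod_mult_q2_binom[of "m - k" m] q2_prod_split[of 0 "m - k" m] k by simp
  have "(q2_prod 0 k * q2_prod 0 (m - k)) * q2_binom m k = (q2_prod 0 k * q2_prod 0 (m - k)) * q2_binom m (m - k)"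
    using a b by (simp add: algebra_simps)
  moreover have "q2_prod 0 k * q2_prod 0 (m - k) \<noteq> 0" using q2_prod_nonzero by simp
  ultimately show ?thesis by simp
qed

lemma q2_binom_Suc_Suc_dual:
  "k \<le> m \<Longrightarrow> q2_binom (Suc m) (Suc k) = fps_X ^ (2 * (m - k)) * q2_binom m k + q2_binom m (Suc k)"
proof -
  assume k: "k \<le> m"
  show ?thesis
  proof (cases "k = m")
    case True
    then show ?thesis by (simp add: q2_binom_eq_0 q2_binom_self)
  next
    case False
    then obtain t where t: "m - k = Suc t" using k by (cases "m - k") auto
    have "q2_binom (Suc m) (Suc k) = q2_binom (Suc m) (Suc m - Suc k)" using k by (intro q2_binom_symmetric) simp
    also have "Suc m - Suc k = Suc t" using t by simp
    also have "q2_binom (Suc m) (Suc t) = q2_binom m t + fps_X ^ (2 * Suc t) * q2_binom m (Suc t)" by simp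
    also have "q2_binom m t = q2_binom m (Suc k)"
    proof -
      have "t \<le> m" using t by simp
      then have "q2_binom m t = q2_binom m (m - t)" by (rule q2_binom_symmetric)
      moreover have "m - t = Suc k" using t k by simp
      ultimately show ?thesis by simp
    qed
    also have "q2_binom m (Suc t) = q2_binom m k"
    proof -
      have "q2_binom m k = q2_binom m (m - k)" using k by (rule q2_binom_symmetric)
      then show ?thesis using t by simp
    qed
    finally show ?thesis using t by (simp add: algebra_simps)
  qed
qed

(* Extended by zero outside 0..m, so that shifting the index needs no case distinction. *)
definition q2_binom_int :: "nat \<Rightarrow> int \<Rightarrow> int fps" where
  "q2_binom_int m j = (if 0 \<le> j \<and> j \<le> int m then q2_binom m (nat j) else 0)"

lemma q2_binom_int_nonzero: "q2_binom_int m j \<noteq> 0 \<Longrightarrow> 0 \<le> j \<and> j \<le> int m"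
  by (auto simp: q2_binom_int_def split: if_splits)

lemma q2_binom_int_of_Suc:
  assumes "j = int (Suc k)"
  shows "q2_binom_int m j = (if Suc k \<le> m then q2_binom m (Suc k) else 0)"
    and "q2_binom_int m (j - 1) = (if k \<le> m then q2_binom m k else 0)"
    and "nat j = Suc k"
  using assms by (auto simp: q2_binom_int_def nat_add_distrib)

lemma q2_binom_int_Suc:
  "q2_binom_int (Suc m) j = q2_binom_int m (j - 1) + fps_X ^ (2 * nat j) * q2_binom_int m j"
proof (cases "j \<le> 0")
  case True
  then show ?thesis
    by (cases "j = 0") (simp_all add: q2_binom_int_def q2_binom_0)
next
  case False
  then obtain k where k: "j = int (Suc k)"
    by (metis gr0_implies_Suc linorder_not_le of_nat_0_less_iff pos_int_cases)
  show ?thesis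
    unfolding q2_binom_int_of_Suc[OF k] by (auto simp: q2_binom_eq_0)
qed

lemma q2_binom_int_Suc_dual:
  "q2_binom_int (Suc m) j = fps_X ^ (2 * nat (int m + 1 - j)) * q2_binom_int m (j - 1) + q2_binom_int m j"
proof (cases "j \<le> 0")
  case True
  then show ?thesis
    by (cases "j = 0") (simp_all add: q2_binom_int_def q2_binom_0)
next
  case False
  then obtain k where k: "j = int (Suc k)"
    by (metis gr0_implies_Suc linorder_not_le of_nat_0_less_iff pos_int_cases)
  show ?thesis
  proof (cases "k \<le> m")
    case True
    then have "nat (int m + 1 - j) = m - k"
      using k by simp
    then show ?thesis
      unfolding q2_binom_int_of_Suc[OF k] using True
      by (simp add: q2_binom_Suc_Suc_dual q2_binom_eq_0 del: q2_binom.simps)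
  next
    case False
    then show ?thesis
      unfolding q2_binom_int_of_Suc[OF k] by (simp add: q2_binom_eq_0)
  qed
qed

lemma q2_binom_int_Suc_Suc: "q2_binom_int (Suc (Suc m)) j = fps_X ^ (2 * nat (int m + 2 - j)) * q2_binom_int m (j - 2)
   + (1 + fps_X ^ (2 * (m + 1))) * q2_binom_int m (j - 1) + fps_X ^ (2 * nat j) * q2_binom_int m j"
proof -
  have "q2_binom_int (Suc (Suc m)) j
      = fps_X ^ (2 * nat (int m + 2 - j)) * q2_binom_int (Suc m) (j - 1) + q2_binom_int (Suc m) j"
    using q2_binom_int_Suc_dual[of "Suc m" j] by (simp add: add.commute)
  also have "q2_binom_int (Suc m) (j - 1) = q2_binom_int m (j - 2) + fps_X ^ (2 * nat (j - 1)) * q2_binom_int m (j - 1)"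
    using q2_binom_int_Suc[of m "j - 1"] by simp
  also have "q2_binom_int (Suc m) j = q2_binom_int m (j - 1) + fps_X ^ (2 * nat j) * q2_binom_int m j"
    by (rule q2_binom_int_Suc)
  also have "fps_X ^ (2 * nat (int m + 2 - j)) * (fps_X ^ (2 * nat (j - 1)) * q2_binom_int m (j - 1))
      = fps_X ^ (2 * (m + 1)) * q2_binom_int m (j - 1)"
  proof (cases "q2_binom_int m (j - 1) = 0")
    case True
    then show ?thesis by simp
  next
    case False
    then have h: "0 \<le> j - 1 \<and> j - 1 \<le> int m" by (rule q2_binom_int_nonzero)
    define t where "t = nat (j - 1)"
    have jt: "j = int t + 1" "t \<le> m" using h by (auto simp: t_def)
    have "int m + 2 - j = int (m + 1 - t)" using jt by simp
    then have "nat (int m + 2 - j) = m + 1 - t" by simp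
    moreover have "nat (j - 1) = t" by (simp add: t_def)
    ultimately have "2 * nat (int m + 2 - j) + 2 * nat (j - 1) = 2 * (m + 1)" using jt by simp
    then show ?thesis by (simp add: mult.assoc flip: power_add)
  qed
  ultimately show ?thesis
    by (simp add: algebra_simps)
qed




definition jtp_term :: "nat \<Rightarrow> int \<Rightarrow> int fps" where
  "jtp_term n k = fps_X ^ (nat (k^2)) * q2_binom_int (2*n) (int n + k)"

definition parity_sign :: "int \<Rightarrow> int fps" where
  "parity_sign k = (if even k then 1 else -1)"

definition jtp_sum :: "nat \<Rightarrow> int fps" where
  "jtp_sum n = (\<Sum>k\<in>{-int n..int n}. parity_sign k * jtp_term n k)"

lemma jtp_term_outside: "k < - int n \<or> k > int n \<Longrightarrow> jtp_term n k = 0"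
  by (auto simp: jtp_term_def q2_binom_int_def)

lemma sum_int_shift:
  fixes f :: "int \<Rightarrow> 'a::comm_monoid_add"
  shows "(\<Sum>k\<in>{a..b}. f (k + d)) = (\<Sum>k\<in>{a+d..b+d}. f k)"
  by (rule sum.reindex_bij_witness[of _ "\<lambda>k. k - d" "\<lambda>k. k + d"]) auto

lemma jtp_sum_extend:
  assumes "a \<le> - int n" "int n \<le> b"
  shows "(\<Sum>k\<in>{a..b}. parity_sign k * jtp_term n k) = jtp_sum n"
  unfolding jtp_sum_def
proof (rule sum.mono_neutral_right)
  show "\<forall>k\<in>{a..b} - {- int n..int n}. parity_sign k * jtp_term n k = 0"
    using jtp_term_outside by auto
qed (use assms in auto)

lemma square_shift_down:
  assumes "k \<le> int n + 1"
  shows "nat (k^2) + 2 * nat (int n + 1 - k) = 2*n + 1 + nat ((k - 1)^2)"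
proof -
  have "int (nat (k^2) + 2 * nat (int n + 1 - k)) = k^2 + 2 * (int n + 1 - k)"
    using assms by simp
  also have "\<dots> = int (2*n + 1) + (k - 1)^2"
    by (simp add: power2_eq_square algebra_simps)
  also have "\<dots> = int (2*n + 1 + nat ((k - 1)^2))"
    by simp
  finally show ?thesis by (simp only: of_nat_eq_iff)
qed

lemma square_shift_up:
  assumes "- int n - 1 \<le> k"
  shows "nat (k^2) + 2 * nat (int n + 1 + k) = 2*n + 1 + nat ((k + 1)^2)"
proof -
  have "int (nat (k^2) + 2 * nat (int n + 1 + k)) = k^2 + 2 * (int n + 1 + k)"
    using assms by simp
  also have "\<dots> = int (2*n + 1) + (k + 1)^2"
    by (simp add: power2_eq_square algebra_simps)
  also have "\<dots> = int (2*n + 1 + nat ((k + 1)^2))"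
    by simp
  finally show ?thesis by (simp only: of_nat_eq_iff)
qed

lemma jtp_term_shift_down:
  "fps_X ^ nat (k^2) * (fps_X ^ (2 * nat (int n + 1 - k)) * q2_binom_int (2*n) (int n + (k - 1)))
     = fps_X ^ (2*n + 1) * jtp_term n (k - 1)"
proof (cases "q2_binom_int (2*n) (int n + (k - 1)) = 0")
  case False
  then have "0 \<le> int n + (k - 1) \<and> int n + (k - 1) \<le> int (2*n)"
    by (rule q2_binom_int_nonzero)
  then have "nat (k^2) + 2 * nat (int n + 1 - k) = 2*n + 1 + nat ((k - 1)^2)"
    by (intro square_shift_down) auto
  then show ?thesis
    unfolding jtp_term_def by (simp add: mult.assoc flip: power_add)
qed (simp add: jtp_term_def)

lemma jtp_term_shift_up:
  "fps_X ^ nat (k^2) * (fps_X ^ (2 * nat (int n + 1 + k)) * q2_binom_int (2*n) (int n + (k + 1)))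
     = fps_X ^ (2*n + 1) * jtp_term n (k + 1)"
proof (cases "q2_binom_int (2*n) (int n + (k + 1)) = 0")
  case False
  then have "0 \<le> int n + (k + 1)"
    using q2_binom_int_nonzero by blast
  then have "nat (k^2) + 2 * nat (int n + 1 + k) = 2*n + 1 + nat ((k + 1)^2)"
    by (intro square_shift_up) auto
  then show ?thesis
    unfolding jtp_term_def by (simp add: mult.assoc flip: power_add)
qed (simp add: jtp_term_def)

lemma jtp_term_Suc:
  "jtp_term (Suc n) k = fps_X ^ (2*n + 1) * jtp_term n (k - 1)
     + (1 + fps_X ^ (2 * (2*n + 1))) * jtp_term n k + fps_X ^ (2*n + 1) * jtp_term n (k + 1)"
proof -
  have recurrence: "q2_binom_int (Suc (Suc (2*n))) (int (Suc n) + k)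
      = fps_X ^ (2 * nat (int (2*n) + 2 - (int (Suc n) + k))) * q2_binom_int (2*n) (int (Suc n) + k - 2)
        + (1 + fps_X ^ (2 * (2*n + 1))) * q2_binom_int (2*n) (int (Suc n) + k - 1)
        + fps_X ^ (2 * nat (int (Suc n) + k)) * q2_binom_int (2*n) (int (Suc n) + k)"
    by (rule q2_binom_int_Suc_Suc)
  have indices: "int (Suc n) + k - 2 = int n + (k - 1)" "int (Suc n) + k - 1 = int n + k"
    "int (2*n) + 2 - (int (Suc n) + k) = int n + 1 - k" "int (Suc n) + k = int n + 1 + k"
    "int (Suc n) + k = int n + (k + 1)"
    by simp_all
  have "jtp_term (Suc n) k = fps_X ^ nat (k^2) * q2_binom_int (Suc (Suc (2*n))) (int (Suc n) + k)"
    by (simp add: jtp_term_def)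
  also have "\<dots> = fps_X ^ nat (k^2) * (fps_X ^ (2 * nat (int n + 1 - k)) * q2_binom_int (2*n) (int n + (k - 1)))
      + (1 + fps_X ^ (2 * (2*n + 1))) * (fps_X ^ nat (k^2) * q2_binom_int (2*n) (int n + k))
      + fps_X ^ nat (k^2) * (fps_X ^ (2 * nat (int n + 1 + k)) * q2_binom_int (2*n) (int n + (k + 1)))"
    unfolding recurrence indices(1-3) unfolding indices(4)[symmetric] indices(5)
    by (simp add: algebra_simps)
  also have "\<dots> = fps_X ^ (2*n + 1) * jtp_term n (k - 1) + (1 + fps_X ^ (2 * (2*n + 1))) * jtp_term n k
      + fps_X ^ (2*n + 1) * jtp_term n (k + 1)"
    unfolding jtp_term_shift_down jtp_term_shift_up by (simp add: jtp_term_def)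
  finally show ?thesis .
qed

lemma sum_parity_sign_jtp_term_shift:
  assumes "d = 1 \<or> d = -1"
  shows "(\<Sum>k\<in>{- int (Suc n)..int (Suc n)}. parity_sign k * jtp_term n (k + d)) = - jtp_sum n"
proof -
  have "parity_sign k * jtp_term n (k + d) = - (parity_sign (k + d) * jtp_term n (k + d))" for k
    using assms by (auto simp: parity_sign_def)
  then have "(\<Sum>k\<in>{- int (Suc n)..int (Suc n)}. parity_sign k * jtp_term n (k + d))
      = (\<Sum>k\<in>{- int (Suc n)..int (Suc n)}. - (parity_sign (k + d) * jtp_term n (k + d)))"
    by (rule sum.cong[OF refl])
  also have "\<dots> = - (\<Sum>k\<in>{- int (Suc n) + d..int (Suc n) + d}. parity_sign k * jtp_term n k)"
    by (simp only: sum_negf sum_int_shift[of "\<lambda>k. parity_sign k * jtp_term n k"])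
  also have "\<dots> = - jtp_sum n"
    using assms by (subst jtp_sum_extend) auto
  finally show ?thesis .
qed

lemma jtp_sum_Suc: "jtp_sum (Suc n) = (1 - fps_X ^ (2*n + 1))^2 * jtp_sum n"
proof -
  define a :: "int fps" where "a = fps_X ^ (2*n + 1)"
  define b :: "int fps" where "b = 1 + fps_X ^ (2 * (2*n + 1))"
  have "b = 1 + a^2"
    unfolding a_def b_def by (metis power_mult mult.commute)
  let ?I = "{- int (Suc n)..int (Suc n)}"
  have "jtp_sum (Suc n) = a * (\<Sum>k\<in>?I. parity_sign k * jtp_term n (k + (-1)))
      + b * (\<Sum>k\<in>?I. parity_sign k * jtp_term n k) + a * (\<Sum>k\<in>?I. parity_sign k * jtp_term n (k + 1))"
    unfolding jtp_sum_def a_def b_def by (simp add: jtp_term_Suc sum.distrib sum_distrib_left algebra_simps)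
  also have "\<dots> = (b - 2 * a) * jtp_sum n"
    using sum_parity_sign_jtp_term_shift[of 1 n] sum_parity_sign_jtp_term_shift[of "-1" n]
      jtp_sum_extend[of "- int (Suc n)" n "int (Suc n)"]
    by (simp add: algebra_simps)
  also have "b - 2 * a = (1 - a)^2"
    using \<open>b = 1 + a^2\<close> by (simp add: power2_eq_square algebra_simps)
  finally show ?thesis
    by (simp add: a_def)
qed

lemma jtp_sum_0: "jtp_sum 0 = 1"
  by (simp add: jtp_sum_def parity_sign_def jtp_term_def q2_binom_int_def)

lemma finite_jacobi_triple_product: "jtp_sum n = (\<Prod>j\<in>{1..n}. (1 - fps_X ^ (2*j - 1))^2)"
proof (induction n)
  case 0
  then show ?case by (simp add: jtp_sum_0)
next
  case (Suc n)
  have "2 * Suc n - 1 = 2*n + 1" by simp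
  then show ?case using Suc by (simp add: jtp_sum_Suc mult.commute)
qed

section \<open>Gauss's identity for overpartitions\<close>

lemma fps_cutoff_mono:
  "fps_cutoff n f = fps_cutoff n g \<Longrightarrow> m \<le> n \<Longrightarrow> fps_cutoff m f = fps_cutoff m g"
  by (simp add: fps_cutoff_eq_fps_cutoff_iff)

lemma fps_cutoff_one_minus_X_power:
  "n \<le> e \<Longrightarrow> fps_cutoff n (1 - fps_X ^ e :: 'a::comm_ring_1 fps) = fps_cutoff n 1"
  by (auto simp: fps_cutoff_eq_fps_cutoff_iff)

lemma fps_cutoff_prod_one_minus_X_power:
  "(\<And>k. k \<in> A \<Longrightarrow> n \<le> e k)
     \<Longrightarrow> fps_cutoff n (\<Prod>k\<in>A. 1 - fps_X ^ e k :: 'a::comm_ring_1 fps) = fps_cutoff n 1"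
proof (induction A rule: infinite_finite_induct)
  case (insert x F)
  then show ?case
    using fps_cutoff_mult_cong[OF fps_cutoff_one_minus_X_power] by fastforce
qed simp_all

lemma fps_cutoff_cancel:
  fixes D E F :: "'a::comm_ring_1 fps"
  assumes "D $ 0 = 1" and "fps_cutoff n (D * E) = fps_cutoff n (D * F)"
  shows "fps_cutoff n E = fps_cutoff n F"
proof -
  have "(E - F) $ i = 0" if "i < n" for i
    using that
  proof (induction i rule: less_induct)
    case (less i)
    have "0 = (D * (E - F)) $ i"
      using assms(2) less.prems by (simp add: fps_cutoff_eq_fps_cutoff_iff algebra_simps)
    also have "\<dots> = D $ 0 * (E - F) $ i + (\<Sum>j=Suc 0..i. D $ j * (E - F) $ (i - j))"
      by (simp add: fps_mult_nth sum.atLeast_Suc_atMost)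
    also have "(\<Sum>j=Suc 0..i. D $ j * (E - F) $ (i - j)) = 0"
      using less by (intro sum.neutral) auto
    finally show ?case
      using assms(1) by simp
  qed
  then show ?thesis
    by (simp add: fps_cutoff_eq_fps_cutoff_iff)
qed

lemma fps_X_power_mult_nth_cutoff_one:
  assumes "fps_cutoff m A = fps_cutoff m 1" and "N < e + m"
  shows "(fps_X ^ e * A) $ N = (if N = e then 1 else (0 :: 'a::comm_ring_1))"
proof (cases "e \<le> N")
  case True
  then have "A $ (N - e) = (1 :: 'a fps) $ (N - e)"
    using assms by (metis fps_cutoff_eq_fps_cutoff_iff add.commute less_diff_conv2)
  then show ?thesis
    using True by (auto simp: fps_X_power_mult_nth)
qed (auto simp: fps_X_power_mult_nth)

lemma fps_cutoff_q2_prod: "fps_cutoff (2 * Suc a) (q2_prod a b) = fps_cutoff (2 * Suc a) 1"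
  unfolding q2_prod_def by (rule fps_cutoff_prod_one_minus_X_power) simp

lemma fps_cutoff_q2_prod_mult_q2_binom:
  assumes "t \<le> n"
  shows "fps_cutoff (2 * Suc (n - t)) (q2_prod 0 n * q2_binom (2*n) (n + t))
           = fps_cutoff (2 * Suc (n - t)) 1"
proof -
  have binom: "q2_prod 0 (n - t) * q2_binom (2*n) (n + t) = q2_prod (n + t) (2*n)"
    using q2_prod_mult_q2_binom[of "n + t" "2*n"] assms by simp
  have split: "q2_prod 0 (n - t) * q2_prod (n - t) n = q2_prod 0 n"
    by (rule q2_prod_split) auto
  have "q2_prod 0 n * q2_binom (2*n) (n + t)
      = q2_prod (n - t) n * (q2_prod 0 (n - t) * q2_binom (2*n) (n + t))"
    unfolding split[symmetric] by (simp only: mult_ac)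
  also have "\<dots> = q2_prod (n - t) n * q2_prod (n + t) (2*n)"
    by (simp only: binom)
  also have "fps_cutoff (2 * Suc (n - t)) \<dots> = fps_cutoff (2 * Suc (n - t)) (1 * 1)"
    by (intro fps_cutoff_mult_cong fps_cutoff_q2_prod fps_cutoff_mono[OF fps_cutoff_q2_prod]) simp
  finally show ?thesis
    by simp
qed

lemma fps_cutoff_q2_prod_mult_q2_binom_int:
  assumes "\<bar>k\<bar> \<le> int n"
  shows "fps_cutoff (2 * Suc (n - nat \<bar>k\<bar>)) (q2_prod 0 n * q2_binom_int (2*n) (int n + k))
           = fps_cutoff (2 * Suc (n - nat \<bar>k\<bar>)) 1"
proof -
  define t where "t = nat \<bar>k\<bar>"
  have "t \<le> n"
    using assms by (simp add: t_def)
  have "q2_binom_int (2*n) (int n + k) = q2_binom (2*n) (n + t)"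
  proof (cases "k \<ge> 0")
    case True
    then show ?thesis
      using assms by (simp add: q2_binom_int_def t_def nat_add_distrib)
  next
    case False
    then have "nat (int n + k) = n - t"
      using assms by (simp add: t_def)
    then have "q2_binom_int (2*n) (int n + k) = q2_binom (2*n) (n - t)"
      using assms False by (simp add: q2_binom_int_def)
    also have "\<dots> = q2_binom (2*n) (n + t)"
      using \<open>t \<le> n\<close> q2_binom_symmetric[of "n - t" "2*n"] by simp
    finally show ?thesis .
  qed
  then show ?thesis
    using fps_cutoff_q2_prod_mult_q2_binom[OF \<open>t \<le> n\<close>] by (simp add: t_def)
qed

lemma int_square_fibre_bounded:
  assumes "N \<le> n"
  shows "{k \<in> {- int n..int n}. nat (k^2) = N} = {k. nat (k^2) = N}"
proof -
  have bounded: "- int n \<le> k \<and> k \<le> int n" if "nat (k^2) = N" for k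
  proof -
    have "k^2 = int N"
      using that by auto
    then show ?thesis
      using abs_le_square_int[of k] assms by linarith
  qed
  then show ?thesis
    by (auto dest: bounded)
qed

lemma q2_prod_mult_jtp_sum_nth:
  assumes "N \<le> n"
  shows "(q2_prod 0 n * jtp_sum n) $ N = (-1) ^ N * theta $ N"
proof -
  have summand: "(q2_prod 0 n * (parity_sign k * jtp_term n k)) $ N
      = (if nat (k^2) = N then (-1) ^ N else 0)" if k: "k \<in> {- int n..int n}" for k
  proof -
    have "\<bar>k\<bar> \<le> int n"
      using k by auto
    have "0 \<le> (\<bar>k\<bar> - 1)^2"
      by simp
    also have "\<dots> = k^2 - 2 * \<bar>k\<bar> + 1"
      by (simp add: power2_diff)
    finally have "int N < int (nat (k^2) + 2 * Suc (n - nat \<bar>k\<bar>))"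
      using assms \<open>\<bar>k\<bar> \<le> int n\<close> by (simp add: of_nat_diff)
    then have "N < nat (k^2) + 2 * Suc (n - nat \<bar>k\<bar>)"
      by (simp only: of_nat_less_iff)
    then have "(fps_X ^ nat (k^2) * (q2_prod 0 n * q2_binom_int (2*n) (int n + k))) $ N
        = (if N = nat (k^2) then 1 else 0)"
      by (rule fps_X_power_mult_nth_cutoff_one[OF
            fps_cutoff_q2_prod_mult_q2_binom_int[OF \<open>\<bar>k\<bar> \<le> int n\<close>]])
    moreover have "even k \<longleftrightarrow> even N" if "nat (k^2) = N"
      using that by (auto simp: even_nat_iff)
    ultimately show ?thesis
      by (auto simp: jtp_term_def parity_sign_def mult_ac)
  qed
  have "(q2_prod 0 n * jtp_sum n) $ N
      = (\<Sum>k\<in>{- int n..int n}. (q2_prod 0 n * (parity_sign k * jtp_term n k)) $ N)"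
    by (simp add: jtp_sum_def sum_distrib_left fps_sum_nth)
  also have "\<dots> = (\<Sum>k\<in>{- int n..int n}. if nat (k^2) = N then (-1) ^ N else 0)"
    by (rule sum.cong) (simp_all add: summand)
  also have "\<dots> = (\<Sum>k\<in>{k \<in> {- int n..int n}. nat (k^2) = N}. (-1) ^ N)"
    by (rule sum.inter_filter[symmetric]) simp
  also have "\<dots> = (-1) ^ N * theta $ N"
    unfolding int_square_fibre_bounded[OF assms] by (simp add: theta_def)
  finally show ?thesis .
qed

lemma prod_one_minus_X_power_double:
  "(\<Prod>k=1..2*n. 1 - fps_X ^ k :: int fps) = (\<Prod>j=1..n. 1 - fps_X ^ (2*j - 1)) * q2_prod 0 n"
proof (induction n)
  case (Suc n)
  have "{1..2 * Suc n} = insert (2*n + 2) (insert (2*n + 1) {1..2*n})"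
    by auto
  then have "(\<Prod>k=1..2 * Suc n. 1 - fps_X ^ k :: int fps)
      = (1 - fps_X ^ (2*n + 2)) * ((1 - fps_X ^ (2*n + 1)) * (\<Prod>k=1..2*n. 1 - fps_X ^ k))"
    by simp
  then show ?case
    unfolding Suc by (simp add: q2_prod_Suc mult_ac)
qed (simp add: q2_prod_def)

lemma q2_prod_mult_jtp_sum_mult_q2_prod:
  "q2_prod 0 n * jtp_sum n * q2_prod 0 n = (\<Prod>k=1..2*n. 1 - fps_X ^ k :: int fps)^2"
  unfolding prod_one_minus_X_power_double finite_jacobi_triple_product
  by (simp add: power2_eq_square prod.distrib mult_ac)

lemma q2_prod_0_eq: "q2_prod 0 m = (\<Prod>k=1..m. 1 - fps_X ^ k) * (\<Prod>k=1..m. 1 + fps_X ^ k)"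
proof -
  have "q2_prod 0 m = (\<Prod>k=1..m. (1 - fps_X ^ k) * (1 + fps_X ^ k))"
    unfolding q2_prod_def
    by (intro prod.cong) (auto simp: algebra_simps power_mult mult.commute[of 2] power2_eq_square
        simp flip: power_add)
  then show ?thesis
    by (simp add: prod.distrib)
qed

lemma fps_cutoff_prod_one_minus_X_power_double:
  "fps_cutoff (Suc m) (\<Prod>k=1..2*m. 1 - fps_X ^ k :: 'a::comm_ring_1 fps)
     = fps_cutoff (Suc m) (\<Prod>k=1..m. 1 - fps_X ^ k)"
proof -
  have "{1..2*m} = {1..m} \<union> {Suc m..2*m}" and "{1..m} \<inter> {Suc m..2*m} = {}"
    by auto
  then have "(\<Prod>k=1..2*m. 1 - fps_X ^ k :: 'a fps)
      = (\<Prod>k=1..m. 1 - fps_X ^ k) * (\<Prod>k=Suc m..2*m. 1 - fps_X ^ k)"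
    by (simp add: prod.union_disjoint)
  also have "fps_cutoff (Suc m) \<dots> = fps_cutoff (Suc m) ((\<Prod>k=1..m. 1 - fps_X ^ k) * 1)"
    by (intro fps_cutoff_mult_cong fps_cutoff_prod_one_minus_X_power) auto
  finally show ?thesis
    by simp
qed

definition theta_neg :: "int fps" where
  "theta_neg = Abs_fps (\<lambda>n. (-1) ^ n * theta $ n)"

lemma fps_cutoff_theta_neg_mult:
  "fps_cutoff (Suc m) (theta_neg * (\<Prod>k=1..m. 1 + fps_X ^ k))
     = fps_cutoff (Suc m) (\<Prod>k=1..m. 1 - fps_X ^ k)"
proof -
  let ?D = "\<Prod>k=1..m. 1 - fps_X ^ k :: int fps"
  have "fps_cutoff (Suc m) theta_neg = fps_cutoff (Suc m) (q2_prod 0 m * jtp_sum m)"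
    by (simp add: fps_cutoff_eq_fps_cutoff_iff theta_neg_def q2_prod_mult_jtp_sum_nth)
  then have "fps_cutoff (Suc m) (theta_neg * q2_prod 0 m)
      = fps_cutoff (Suc m) ((\<Prod>k=1..2*m. 1 - fps_X ^ k) * (\<Prod>k=1..2*m. 1 - fps_X ^ k))"
    using fps_cutoff_mult_cong q2_prod_mult_jtp_sum_mult_q2_prod by (metis power2_eq_square)
  also have "\<dots> = fps_cutoff (Suc m) (?D * ?D)"
    by (intro fps_cutoff_mult_cong fps_cutoff_prod_one_minus_X_power_double)
  finally have "fps_cutoff (Suc m) (?D * (theta_neg * (\<Prod>k=1..m. 1 + fps_X ^ k)))
      = fps_cutoff (Suc m) (?D * ?D)"
    by (simp add: q2_prod_0_eq mult_ac)
  then show ?thesis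
    by (rule fps_cutoff_cancel[rotated]) (simp add: fps_prod_nth_0)
qed

lemma fps_cutoff_overpartitions_le_fps_mult_theta_neg:
  "fps_cutoff (Suc m) (overpartitions_le_fps m * theta_neg) = fps_cutoff (Suc m) 1"
proof -
  let ?D = "\<Prod>k=1..m. 1 - fps_X ^ k :: int fps" and ?P = "\<Prod>k=1..m. 1 + fps_X ^ k :: int fps"
  have "fps_cutoff (Suc m) (?P * (overpartitions_le_fps m * theta_neg))
      = fps_cutoff (Suc m) (overpartitions_le_fps m * (theta_neg * ?P))"
    by (simp only: mult_ac)
  also have "\<dots> = fps_cutoff (Suc m) (overpartitions_le_fps m * ?D)"
    by (intro fps_cutoff_mult_cong fps_cutoff_theta_neg_mult) simp
  also have "\<dots> = fps_cutoff (Suc m) (?P * 1)"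
    by (simp only: overpartitions_le_fps_mult mult_1_right)
  finally show ?thesis
    by (rule fps_cutoff_cancel[rotated]) (simp add: fps_prod_nth_0)
qed

lemma neg_one_power_mult_power_diff:
  assumes "i \<le> n"
  shows "(-1::int) ^ n * (-1) ^ (n - i) = (-1) ^ i"
proof -
  have "(-1::int) ^ n = (-1) ^ i * (-1) ^ (n - i)"
    using assms by (simp flip: power_add)
  then have "(-1::int) ^ n * (-1) ^ (n - i) = (-1) ^ i * ((-1) ^ (n - i) * (-1) ^ (n - i))"
    by (simp add: mult_ac)
  also have "(-1::int) ^ (n - i) * (-1) ^ (n - i) = 1"
    by (simp flip: power_add)
  finally show ?thesis
    by simp
qed

lemma overpartition_convolution_theta:
  "(\<Sum>i=0..n. (-1) ^ i * int (pbar i) * theta $ (n - i)) = (if n = 0 then 1 else (0::int))"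
proof -
  have "(-1) ^ n * (overpartitions_le_fps n $ i * theta_neg $ (n - i))
      = (-1) ^ i * int (pbar i) * theta $ (n - i)" if "i \<in> {0..n}" for i
  proof -
    have "(-1) ^ n * (overpartitions_le_fps n $ i * theta_neg $ (n - i))
        = ((-1) ^ n * (-1) ^ (n - i)) * int (pbar i) * theta $ (n - i)"
      using that by (simp add: overpartitions_le_fps_def theta_neg_def pbar_def
          overpartitions_le_self mult_ac)
    then show ?thesis
      using that by (simp add: neg_one_power_mult_power_diff)
  qed
  then have "(\<Sum>i=0..n. (-1) ^ i * int (pbar i) * theta $ (n - i))
      = (-1) ^ n * (\<Sum>i=0..n. overpartitions_le_fps n $ i * theta_neg $ (n - i))"
    by (simp add: sum_distrib_left)
  also have "(\<Sum>i=0..n. overpartitions_le_fps n $ i * theta_neg $ (n - i)) = (1 :: int fps) $ n"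
    using fps_cutoff_overpartitions_le_fps_mult_theta_neg[of n]
    by (simp add: fps_cutoff_eq_fps_cutoff_iff fps_mult_nth[symmetric])
  finally show ?thesis
    by simp
qed

theorem overpartition_fps_mult_theta:
  "(Abs_fps (\<lambda>n. (-1) ^ n * of_nat (pbar n)) :: 'a::comm_ring_1 fps) * theta = 1"
proof (rule fps_ext)
  fix n
  have "(Abs_fps (\<lambda>n. (-1) ^ n * of_nat (pbar n)) * theta :: 'a fps) $ n
      = of_int (\<Sum>i=0..n. (-1) ^ i * int (pbar i) * theta $ (n - i))"
    by (simp add: fps_mult_nth theta_def)
  then show "(Abs_fps (\<lambda>n. (-1) ^ n * of_nat (pbar n)) * theta :: 'a fps) $ n = (1 :: 'a fps) $ n"
    by (simp add: overpartition_convolution_theta)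
qed

section \<open>Congruences modulo 5\<close>

interpretation theta_5: theta_mod_5 "theta :: 5 fps"
  by unfold_locales (simp_all add: theta_section_0 theta_section_2_3 theta_squared)

lemma pbar_5_times_25_power_mod_5:
  assumes "r = 1 \<or> r = 4" and "k \<ge> 1"
  shows "pbar (5 * (25 ^ k * (5 * n + r))) mod 5 = 0"
proof -
  define G :: "5 fps" where "G = Abs_fps (\<lambda>n. (-1) ^ n * of_nat (pbar n))"
  define M where "M = 25 ^ k * (5 * n + r)"
  have "fps_section 5 0 G = theta ^ 3"
    using overpartition_fps_mult_theta fps_mod_5_power_5
    by (intro theta_5.section_0_inverse) (simp_all add: G_def)
  then have "G $ (5 * M) = 0"
    using theta_5.cube_coeff_vanishing[OF assms] fps_section_nth[of 5 0 G M] by (simp add: M_def)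
  then have "(of_nat (pbar (5 * M)) :: 5) = 0"
    by (cases "even (5 * M)") (simp_all add: G_def)
  then show ?thesis
    by (simp add: M_def of_nat_eq_0_iff_char_dvd)
qed

theorem theorem3:
  fixes \<alpha> n :: nat
  assumes "\<alpha> \<ge> 1"
  shows "pbar (5 ^ (2 * \<alpha> + 1) * (5 * n + 1)) mod 5 = 0
       \<and> pbar (5 ^ (2 * \<alpha> + 1) * (5 * n + 4)) mod 5 = 0"
proof -
  have "5 ^ (2 * \<alpha> + 1) = 5 * (25 :: nat) ^ \<alpha>"
    by (simp add: power_mult)
  then have "pbar (5 ^ (2 * \<alpha> + 1) * (5 * n + r)) mod 5 = 0" if "r = 1 \<or> r = 4" for r
    using pbar_5_times_25_power_mod_5[OF that assms] by (simp only: mult.assoc)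
  from this[of 1] this[of 4] show ?thesis
    by simp
qed

end
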